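(* Let $M\in\mathcal{L}(\ell_2,\ell_1)$ be defined by $(Mx)_k=x_k/k$ for $k\in\mathbb{N}$, let $d\ge0$ be an integer, and let $U\in\mathcal{L}_M$ be a $d$-diagonal operator. Then $\|\{U\}_M\|_{\mathcal{L}(\ell_2)}\le(2d+1)^{3/2}\|U\|_{\mathcal{L}(\ell_1)}$; i.e. $U\in\mathcal{L}_M^C$ with $C=\sqrt{(2d+1)^3}$.
   Context: $\ell_p$ is indexed by $\mathbb{N}$. An operator $U\in\mathcal{L}(\ell_1)$ is identified with its infinite matrix $(u_{nm})$, $(Ux)_n=\sum_m u_{nm}x_m$. $U$ is $d$-diagonal if $u_{nm}=0$ whenever $|n-m|>d$. $\mathcal{L}_M\subset\mathcal{L}(\ell_1)$ is the set of $U$ with $\operatorname{Im}(UM)\subset\operatorname{Im}M$; for $U\in\mathcal{L}_M$, $\{U\}_M:=M^{-1}UM\in\mathcal{L}(\ell_2)$ (matrix entries $\frac{n}{m}u_{nm}$). $\mathcal{L}_M^C$ is the set of $U\in\mathcal{L}_M$ with $\|\{U\}_M\|_{\mathcal{L}(\ell_2)}\le C\|U\|_{\mathcal{L}(\ell_1)}$. *)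

theory Defs
  imports Complex_Main
begin

text \<open>Sequences in l_p are real sequences indexed by nat; the paper's index k \<in> \<nat> = {1,2,...}
  corresponds to the Isabelle index k - 1, so the weight k becomes real (k+1).\<close>

definition in_l1 :: "(nat \<Rightarrow> real) \<Rightarrow> bool" where
  "in_l1 x \<longleftrightarrow> summable (\<lambda>n. \<bar>x n\<bar>)"

definition norm_l1 :: "(nat \<Rightarrow> real) \<Rightarrow> real" where
  "norm_l1 x = (\<Sum>n. \<bar>x n\<bar>)"

definition in_l2 :: "(nat \<Rightarrow> real) \<Rightarrow> bool" where
  "in_l2 x \<longleftrightarrow> summable (\<lambda>n. (x n)\<^sup>2)"

definition norm_l2 :: "(nat \<Rightarrow> real) \<Rightarrow> real" where
  "norm_l2 x = sqrt (\<Sum>n. (x n)\<^sup>2)"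

definition mat_apply :: "(nat \<Rightarrow> nat \<Rightarrow> real) \<Rightarrow> (nat \<Rightarrow> real) \<Rightarrow> nat \<Rightarrow> real" where
  "mat_apply u x = (\<lambda>n. \<Sum>m. u n m * x m)"

definition bounded_op_l1 :: "(nat \<Rightarrow> nat \<Rightarrow> real) \<Rightarrow> bool" where
  "bounded_op_l1 u \<longleftrightarrow>
     (\<forall>x. in_l1 x \<longrightarrow> (\<forall>n. summable (\<lambda>m. u n m * x m)) \<and> in_l1 (mat_apply u x)) \<and>
     (\<exists>C. \<forall>x. in_l1 x \<longrightarrow> norm_l1 (mat_apply u x) \<le> C * norm_l1 x)"

definition opnorm_l1 :: "(nat \<Rightarrow> nat \<Rightarrow> real) \<Rightarrow> real" where
  "opnorm_l1 u = Sup {norm_l1 (mat_apply u x) | x. in_l1 x \<and> norm_l1 x \<le> 1}"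

definition opnorm_l2 :: "((nat \<Rightarrow> real) \<Rightarrow> (nat \<Rightarrow> real)) \<Rightarrow> real" where
  "opnorm_l2 T = Sup {norm_l2 (T x) | x. in_l2 x \<and> norm_l2 x \<le> 1}"

definition opM :: "(nat \<Rightarrow> real) \<Rightarrow> nat \<Rightarrow> real" where
  "opM x = (\<lambda>k. x k / real (k + 1))"

definition opM_inv :: "(nat \<Rightarrow> real) \<Rightarrow> nat \<Rightarrow> real" where
  "opM_inv y = (\<lambda>k. real (k + 1) * y k)"

definition d_diagonal :: "nat \<Rightarrow> (nat \<Rightarrow> nat \<Rightarrow> real) \<Rightarrow> bool" where
  "d_diagonal d u \<longleftrightarrow> (\<forall>n m. d < (if n \<le> m then m - n else n - m) \<longrightarrow> u n m = 0)"

text \<open>L_M: U \<in> L(l_1) with Im(UM) \<subseteq> Im M.\<close>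
definition in_LM :: "(nat \<Rightarrow> nat \<Rightarrow> real) \<Rightarrow> bool" where
  "in_LM u \<longleftrightarrow> bounded_op_l1 u \<and>
     (\<forall>x. in_l2 x \<longrightarrow> (\<exists>y. in_l2 y \<and> mat_apply u (opM x) = opM y))"

definition conjM :: "(nat \<Rightarrow> nat \<Rightarrow> real) \<Rightarrow> (nat \<Rightarrow> real) \<Rightarrow> nat \<Rightarrow> real" where
  "conjM u x = opM_inv (mat_apply u (opM x))"

end

theory Submission
  imports Defs "HOL-Analysis.Convex"
begin

text \<open>Testing U on the unit vectors shows that every column of U has l_1 norm at most
  \<parallel>U\<parallel>_1; in particular every entry is bounded by \<parallel>U\<parallel>_1. The matrix of {U}_M has entries
  (n/m) u_nm, and on the band |n - m| \<le> d the factor n/m is at most d + 1, so every column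
  of {U}_M has l_2 norm at most (d + 1) \<parallel>U\<parallel>_1. Each row has at most 2d + 1 nonzero entries,
  so Cauchy-Schwarz on the rows followed by exchanging the order of summation bounds
  \<parallel>{U}_M x\<parallel>_2^2 by (2d + 1)(d + 1)^2 \<parallel>U\<parallel>_1^2 \<parallel>x\<parallel>_2^2 \<le> (2d + 1)^3 \<parallel>U\<parallel>_1^2 \<parallel>x\<parallel>_2^2.\<close>

lemma d_diagonal_outside_band:
  assumes "d_diagonal d u" and "m \<notin> {n - d..n + d}"
  shows "u n m = 0"
proof -
  have "d < (if n \<le> m then m - n else n - m)"
    using assms(2) by auto
  then show ?thesis
    using assms(1) unfolding d_diagonal_def by blast
qed

lemma norm_l1_nonneg: "in_l1 x \<Longrightarrow> norm_l1 x \<ge> 0"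
  unfolding norm_l1_def in_l1_def by (simp add: suminf_nonneg)

lemma norm_l1_mat_apply_le_opnorm_l1:
  assumes "bounded_op_l1 u" and "in_l1 x" and "norm_l1 x \<le> 1"
  shows "norm_l1 (mat_apply u x) \<le> opnorm_l1 u"
proof -
  from assms(1) obtain C where C: "\<And>x. in_l1 x \<Longrightarrow> norm_l1 (mat_apply u x) \<le> C * norm_l1 x"
    unfolding bounded_op_l1_def by blast
  have "C * norm_l1 z \<le> \<bar>C\<bar>" if "in_l1 z" and "norm_l1 z \<le> 1" for z
    using that norm_l1_nonneg[of z]
    by (metis abs_ge_self abs_ge_zero mult_left_le mult_right_mono order_trans)
  then have "bdd_above {norm_l1 (mat_apply u x) | x. in_l1 x \<and> norm_l1 x \<le> 1}"
    by (intro bdd_aboveI[where M = "\<bar>C\<bar>"]) (auto intro: order_trans[OF C])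
  then show ?thesis
    unfolding opnorm_l1_def by (rule cSup_upper[rotated]) (use assms in blast)
qed

definition unit_vec :: "nat \<Rightarrow> nat \<Rightarrow> real" where
  "unit_vec m = (\<lambda>k. if k = m then 1 else 0)"

lemma in_l1_unit_vec: "in_l1 (unit_vec m)"
  unfolding in_l1_def unit_vec_def by (rule summable_finite[of "{m}"]) auto

lemma norm_l1_unit_vec: "norm_l1 (unit_vec m) = 1"
  unfolding norm_l1_def unit_vec_def by (subst suminf_finite[of "{m}"]) auto

lemma mat_apply_unit_vec: "mat_apply u (unit_vec m) = (\<lambda>n. u n m)"
  unfolding mat_apply_def unit_vec_def by (rule ext, subst suminf_finite[of "{m}"]) auto

lemma sum_abs_column_le_opnorm_l1:
  assumes "bounded_op_l1 u" and "finite N"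
  shows "(\<Sum>n\<in>N. \<bar>u n m\<bar>) \<le> opnorm_l1 u"
proof -
  have "in_l1 (mat_apply u (unit_vec m))"
    using assms(1) in_l1_unit_vec unfolding bounded_op_l1_def by blast
  then have "summable (\<lambda>n. \<bar>u n m\<bar>)"
    by (simp add: mat_apply_unit_vec in_l1_def)
  then have "(\<Sum>n\<in>N. \<bar>u n m\<bar>) \<le> norm_l1 (mat_apply u (unit_vec m))"
    unfolding mat_apply_unit_vec norm_l1_def by (rule sum_le_suminf) (auto simp: assms(2))
  also have "\<dots> \<le> opnorm_l1 u"
    by (simp add: norm_l1_mat_apply_le_opnorm_l1 assms(1) in_l1_unit_vec norm_l1_unit_vec)
  finally show ?thesis .
qed

lemma abs_entry_le_opnorm_l1:
  assumes "bounded_op_l1 u"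
  shows "\<bar>u n m\<bar> \<le> opnorm_l1 u"
  using sum_abs_column_le_opnorm_l1[OF assms, of "{n}" m] by simp

lemma opnorm_l1_nonneg:
  assumes "bounded_op_l1 u"
  shows "opnorm_l1 u \<ge> 0"
  using abs_entry_le_opnorm_l1[OF assms, of 0 0] by linarith

lemma banded_sum_squares_le:
  fixes w :: "nat \<Rightarrow> nat \<Rightarrow> real" and x :: "nat \<Rightarrow> real"
  assumes col: "\<And>m. (\<Sum>n\<in>{m - d..m + d}. (w n m)\<^sup>2) \<le> K"
  shows "(\<Sum>n<N. (\<Sum>m\<in>{n - d..n + d}. w n m * x m)\<^sup>2)
           \<le> (2 * real d + 1) * K * (\<Sum>m<N + d. (x m)\<^sup>2)"
proof -
  define g where "g n m = (w n m)\<^sup>2 * (x m)\<^sup>2" for n m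
  have g_nonneg: "g n m \<ge> 0" for n m
    by (simp add: g_def)
  have row: "(\<Sum>m\<in>{n - d..n + d}. w n m * x m)\<^sup>2 \<le> (2 * real d + 1) * (\<Sum>m\<in>{n - d..n + d}. g n m)" for n
  proof -
    have "(\<Sum>m\<in>{n - d..n + d}. w n m * x m)\<^sup>2
            \<le> (\<Sum>m\<in>{n - d..n + d}. g n m) * real (card {n - d..n + d})"
      unfolding g_def power_mult_distrib[symmetric] by (rule sum_squared_le_sum_of_squares)
    also have "\<dots> \<le> (\<Sum>m\<in>{n - d..n + d}. g n m) * (2 * real d + 1)"
      by (intro mult_left_mono sum_nonneg g_nonneg) auto
    finally show ?thesis
      by (simp add: mult.commute)
  qed
  have "(\<Sum>n<N. (\<Sum>m\<in>{n - d..n + d}. w n m * x m)\<^sup>2)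
          \<le> (\<Sum>n<N. (2 * real d + 1) * (\<Sum>m\<in>{n - d..n + d}. g n m))"
    by (rule sum_mono[OF row])
  also have "\<dots> = (2 * real d + 1) * (\<Sum>(n, m)\<in>(SIGMA n:{..<N}. {n - d..n + d}). g n m)"
    by (simp add: sum_distrib_left sum.Sigma case_prod_beta)
  also have "(\<Sum>(n, m)\<in>(SIGMA n:{..<N}. {n - d..n + d}). g n m)
               \<le> (\<Sum>(n, m)\<in>(\<lambda>(m, n). (n, m)) ` (SIGMA m:{..<N + d}. {m - d..m + d}). g n m)"
    by (rule sum_mono2) (auto simp: g_nonneg image_iff)
  also have "\<dots> = (\<Sum>(m, n)\<in>(SIGMA m:{..<N + d}. {m - d..m + d}). g n m)"
    by (subst sum.reindex) (auto simp: inj_on_def case_prod_beta)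
  also have "\<dots> = (\<Sum>m<N + d. (x m)\<^sup>2 * (\<Sum>n\<in>{m - d..m + d}. (w n m)\<^sup>2))"
    by (simp add: sum.Sigma[symmetric] g_def sum_distrib_left mult.commute)
  also have "\<dots> \<le> (\<Sum>m<N + d. (x m)\<^sup>2) * K"
    unfolding sum_distrib_right by (intro sum_mono mult_left_mono col) auto
  finally show ?thesis
    by (simp add: ac_simps)
qed

lemma banded_suminf_squares_le:
  fixes w :: "nat \<Rightarrow> nat \<Rightarrow> real" and x :: "nat \<Rightarrow> real"
  assumes col: "\<And>m. (\<Sum>n\<in>{m - d..m + d}. (w n m)\<^sup>2) \<le> K"
    and x: "summable (\<lambda>m. (x m)\<^sup>2)"
  defines "y \<equiv> \<lambda>n. \<Sum>m\<in>{n - d..n + d}. w n m * x m"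
  shows "summable (\<lambda>n. (y n)\<^sup>2)" and "(\<Sum>n. (y n)\<^sup>2) \<le> (2 * real d + 1) * K * (\<Sum>m. (x m)\<^sup>2)"
proof -
  have K: "K \<ge> 0"
    using col[of 0] sum_nonneg[of "{0 - d..0 + d}" "\<lambda>n. (w n 0)\<^sup>2"] by simp
  have partial: "(\<Sum>n<N. (y n)\<^sup>2) \<le> (2 * real d + 1) * K * (\<Sum>m. (x m)\<^sup>2)" for N
  proof -
    have "(\<Sum>n<N. (y n)\<^sup>2) \<le> (2 * real d + 1) * K * (\<Sum>m<N + d. (x m)\<^sup>2)"
      unfolding y_def by (rule banded_sum_squares_le[OF col])
    also have "\<dots> \<le> (2 * real d + 1) * K * (\<Sum>m. (x m)\<^sup>2)"
      by (intro mult_left_mono sum_le_suminf x) (auto simp: K)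
    finally show ?thesis .
  qed
  show "summable (\<lambda>n. (y n)\<^sup>2)"
    by (rule bounded_imp_summable[where B = "(2 * real d + 1) * K * (\<Sum>m. (x m)\<^sup>2)"])
       (use partial[of "Suc _"] in \<open>simp_all add: lessThan_Suc_atMost[symmetric] del: sum.lessThan_Suc\<close>)
  then show "(\<Sum>n. (y n)\<^sup>2) \<le> (2 * real d + 1) * K * (\<Sum>m. (x m)\<^sup>2)"
    using suminf_le_const partial by blast
qed

lemma weight_ratio_le:
  assumes "m \<in> {n - d..n + d}"
  shows "real (n + 1) / real (m + 1) \<le> real d + 1"
proof -
  have "real (n + 1) \<le> real d + real m + 1"
    using assms by auto
  also have "\<dots> \<le> (real d + 1) * real (m + 1)"
    by (simp add: algebra_simps)
  finally have "real (n + 1) \<le> (real d + 1) * real (m + 1)" .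
  then show ?thesis
    by (simp add: divide_le_eq)
qed

lemma conjM_apply:
  assumes "d_diagonal d u"
  shows "conjM u x n = (\<Sum>m\<in>{n - d..n + d}. (real (n + 1) / real (m + 1) * u n m) * x m)"
proof -
  have "mat_apply u (opM x) n = (\<Sum>m\<in>{n - d..n + d}. u n m * (x m / real (m + 1)))"
    unfolding mat_apply_def opM_def
    by (rule suminf_finite) (auto simp: d_diagonal_outside_band[OF assms])
  then show ?thesis
    unfolding conjM_def opM_inv_def by (simp add: sum_distrib_left mult.assoc)
qed

lemma sum_squares_column_conjM_le:
  assumes "bounded_op_l1 u"
  shows "(\<Sum>n\<in>{m - d..m + d}. (real (n + 1) / real (m + 1) * u n m)\<^sup>2)
           \<le> (real d + 1)\<^sup>2 * (opnorm_l1 u)\<^sup>2"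
proof -
  let ?A = "opnorm_l1 u"
  have A: "?A \<ge> 0"
    by (rule opnorm_l1_nonneg[OF assms])
  have entry: "(real (n + 1) / real (m + 1) * u n m)\<^sup>2 \<le> (real d + 1)\<^sup>2 * ?A * \<bar>u n m\<bar>"
    if "n \<in> {m - d..m + d}" for n
  proof -
    have "m \<in> {n - d..n + d}"
      using that by auto
    then have "(real (n + 1) / real (m + 1))\<^sup>2 * (\<bar>u n m\<bar> * \<bar>u n m\<bar>) \<le> (real d + 1)\<^sup>2 * (?A * \<bar>u n m\<bar>)"
      by (intro mult_mono power_mono weight_ratio_le mult_right_mono abs_entry_le_opnorm_l1 assms)
         (auto simp: A)
    then show ?thesis
      by (simp add: power2_eq_square power_mult_distrib ac_simps)
  qed
  have "(\<Sum>n\<in>{m - d..m + d}. (real (n + 1) / real (m + 1) * u n m)\<^sup>2)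
          \<le> (\<Sum>n\<in>{m - d..m + d}. (real d + 1)\<^sup>2 * ?A * \<bar>u n m\<bar>)"
    by (rule sum_mono[OF entry])
  also have "\<dots> = (real d + 1)\<^sup>2 * ?A * (\<Sum>n\<in>{m - d..m + d}. \<bar>u n m\<bar>)"
    by (simp add: sum_distrib_left)
  also have "\<dots> \<le> (real d + 1)\<^sup>2 * ?A * ?A"
    by (intro mult_left_mono sum_abs_column_le_opnorm_l1 assms) (auto simp: A)
  finally show ?thesis
    by (simp add: power2_eq_square mult.assoc)
qed

lemma norm_l2_conjM_le:
  assumes "bounded_op_l1 u" and "d_diagonal d u" and "in_l2 x"
  shows "norm_l2 (conjM u x) \<le> sqrt ((2 * real d + 1) ^ 3) * opnorm_l1 u * norm_l2 x"
proof -
  let ?A = "opnorm_l1 u"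
  have A: "?A \<ge> 0"
    by (rule opnorm_l1_nonneg[OF assms(1)])
  have "(\<Sum>n. (conjM u x n)\<^sup>2) \<le> (2 * real d + 1) * ((real d + 1)\<^sup>2 * ?A\<^sup>2) * (\<Sum>m. (x m)\<^sup>2)"
    unfolding conjM_apply[OF assms(2)]
    by (rule banded_suminf_squares_le(2)[OF sum_squares_column_conjM_le[OF assms(1)]])
       (use assms(3) in \<open>simp add: in_l2_def\<close>)
  also have "\<dots> \<le> (2 * real d + 1) ^ 3 * ?A\<^sup>2 * (\<Sum>m. (x m)\<^sup>2)"
    using assms(3) unfolding in_l2_def
    by (intro mult_right_mono suminf_nonneg)
       (auto simp: power3_eq_cube power2_eq_square intro!: mult_left_mono mult_mono)
  finally have "sqrt (\<Sum>n. (conjM u x n)\<^sup>2) \<le> sqrt ((2 * real d + 1) ^ 3 * ?A\<^sup>2 * (\<Sum>m. (x m)\<^sup>2))"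
    by (rule real_sqrt_le_mono)
  then show ?thesis
    by (simp add: norm_l2_def real_sqrt_mult A)
qed

lemma opnorm_l2_le:
  assumes "\<And>x. in_l2 x \<Longrightarrow> norm_l2 x \<le> 1 \<Longrightarrow> norm_l2 (T x) \<le> c"
  shows "opnorm_l2 T \<le> c"
proof -
  have "in_l2 (\<lambda>_. 0) \<and> norm_l2 (\<lambda>_. 0) \<le> 1"
    by (simp add: in_l2_def norm_l2_def)
  then have "{norm_l2 (T x) | x. in_l2 x \<and> norm_l2 x \<le> 1} \<noteq> {}"
    by blast
  then show ?thesis
    unfolding opnorm_l2_def by (rule cSup_least) (use assms in blast)
qed

theorem lemma6:
  fixes u :: "nat \<Rightarrow> nat \<Rightarrow> real" and d :: nat
  assumes "in_LM u" and "d_diagonal d u"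
  shows "opnorm_l2 (conjM u) \<le> sqrt ((2 * real d + 1) ^ 3) * opnorm_l1 u"
proof (rule opnorm_l2_le)
  fix x assume x: "in_l2 x" "norm_l2 x \<le> 1"
  have bounded: "bounded_op_l1 u"
    using assms(1) unfolding in_LM_def by blast
  have "sqrt ((2 * real d + 1) ^ 3) * opnorm_l1 u \<ge> 0"
    using opnorm_l1_nonneg[OF bounded] by simp
  then show "norm_l2 (conjM u x) \<le> sqrt ((2 * real d + 1) ^ 3) * opnorm_l1 u"
    using norm_l2_conjM_le[OF bounded assms(2) x(1)] x(2)
    by (meson mult_left_le order_trans)
qed

end
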